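(* Let $r\geqslant 1$ and $n\geqslant 2r$. There exists $\pi\in\mathrm{Sym}_n$ with $w_H(\pi)=2r$ all of whose non-trivial cycles have length $2$ or $3$, such that $I(n,2r,r)=|B_r(\pi)\cap B_r(I_n)|$.
   Context: $\mathrm{Sym}_n$ is the symmetric group on $[n]$, $I_n$ is the identity, $d$ is the Hamming distance $d(\pi,\tau)=|\{i:\pi(i)\neq\tau(i)\}|$, $w_H(\pi)=d(I_n,\pi)$, and $B_r(\pi)=\{\sigma:d(\sigma,\pi)\leqslant r\}$. $I(n,d,r)=\max_{\pi,\tau,\ d(\pi,\tau)=d}|B_r(\pi)\cap B_r(\tau)|$. *)

theory Defs
  imports "HOL-Combinatorics.Combinatorics"
begin

definition Sym :: "nat \<Rightarrow> (nat \<Rightarrow> nat) set" where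
  "Sym n = {p. p permutes {1..n}}"

definition hdist :: "nat \<Rightarrow> (nat \<Rightarrow> nat) \<Rightarrow> (nat \<Rightarrow> nat) \<Rightarrow> nat" where
  "hdist n p q = card {i \<in> {1..n}. p i \<noteq> q i}"

definition wH :: "nat \<Rightarrow> (nat \<Rightarrow> nat) \<Rightarrow> nat" where
  "wH n p = hdist n id p"

definition ball :: "nat \<Rightarrow> nat \<Rightarrow> (nat \<Rightarrow> nat) \<Rightarrow> (nat \<Rightarrow> nat) set" where
  "ball n r p = {s \<in> Sym n. hdist n s p \<le> r}"

definition Inter_max :: "nat \<Rightarrow> nat \<Rightarrow> nat \<Rightarrow> nat" where
  "Inter_max n d r = Max {card (ball n r p \<inter> ball n r q) | p q.
      p \<in> Sym n \<and> q \<in> Sym n \<and> hdist n p q = d}"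

definition cycles_2_3 :: "(nat \<Rightarrow> nat) \<Rightarrow> bool" where
  "cycles_2_3 p \<longleftrightarrow> (\<forall>i. p i \<noteq> i \<longrightarrow> card (orbit p i) \<in> {2, 3})"

end

theory Submission
  imports Defs
begin

text \<open>Left multiplications are isometries of the Hamming metric, so
  \<open>I(n, 2r, r)\<close> is the maximum of \<open>|B\<^sub>r(\<sigma>) \<inter> B\<^sub>r(I\<^sub>n)|\<close> over \<open>\<sigma>\<close> of weight \<open>2r\<close>.
  For such \<open>\<sigma>\<close>, a permutation \<open>s\<close> in the intersection differs from \<open>\<sigma>\<close> and from \<open>I\<^sub>n\<close> in
  at most \<open>r\<close> points each, and these two sets must cover the \<open>2r\<close> points moved by \<open>\<sigma>\<close>;
  hence \<open>s\<close> agrees at every point with \<open>\<sigma>\<close> or with \<open>I\<^sub>n\<close>, and by injectivity it agrees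
  with \<open>\<sigma>\<close> on a union of cycles of \<open>\<sigma>\<close>. Cutting a cycle of length at least four into a
  transposition and a shorter cycle keeps the weight and does not shrink the intersection,
  since the permutations that follow the cut cycle can be composed with the cutting
  transposition.\<close>

lemma finite_Sym: "finite (Sym n)"
  unfolding Sym_def by (rule finite_permutations) simp

lemma id_in_Sym: "id \<in> Sym n"
  by (simp add: Sym_def permutes_id)

lemma hdist_sym: "hdist n p q = hdist n q p"
  unfolding hdist_def by (metis (no_types, lifting))

lemma hdist_cong:
  assumes "\<And>i. i \<in> {1..n} \<Longrightarrow> p i \<noteq> q i \<longleftrightarrow> p' i \<noteq> q' i"
  shows "hdist n p q = hdist n p' q'"
  unfolding hdist_def using assms by (metis (mono_tags, lifting))

lemma hdist_comp_left:
  assumes "inj u"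
  shows "hdist n (u \<circ> p) (u \<circ> q) = hdist n p q"
  by (rule hdist_cong) (simp add: inj_eq[OF assms])

lemma hdist_comp_right:
  assumes t: "t permutes {1..n}"
  shows "hdist n (p \<circ> t) (q \<circ> t) = hdist n p q"
proof -
  have "{i \<in> {1..n}. (p \<circ> t) i \<noteq> (q \<circ> t) i} = t -` {i \<in> {1..n}. p i \<noteq> q i}"
    using permutes_in_image[OF t] by auto
  then show ?thesis
    unfolding hdist_def using t by (simp only: card_vimage_inj permutes_inj permutes_surj top_greatest)
qed

lemma ball_comp_left:
  assumes u: "u permutes {1..n}"
  shows "ball n r (u \<circ> p) = (\<lambda>s. u \<circ> s) ` ball n r p"
proof (intro set_eqI iffI)
  fix s assume s: "s \<in> ball n r (u \<circ> p)"
  have "inv u \<circ> s \<in> ball n r p"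
    using s hdist_comp_left[OF permutes_inj[OF permutes_inv[OF u]], of n s "u \<circ> p"]
        permutes_compose[OF _ permutes_inv[OF u], of s]
    by (auto simp: ball_def Sym_def o_assoc permutes_inv_o[OF u] permutes_surj[OF u])
  moreover have "s = u \<circ> (inv u \<circ> s)"
    by (simp add: o_assoc permutes_inv_o[OF u])
  ultimately show "s \<in> (\<lambda>s. u \<circ> s) ` ball n r p" by blast
next
  fix s assume "s \<in> (\<lambda>s. u \<circ> s) ` ball n r p"
  then show "s \<in> ball n r (u \<circ> p)"
    using u by (auto simp: ball_def Sym_def hdist_comp_left permutes_inj permutes_compose)
qed

lemma card_ball_inter_comp_left:
  assumes u: "u permutes {1..n}"
  shows "card (ball n r (u \<circ> p) \<inter> ball n r (u \<circ> q)) = card (ball n r p \<inter> ball n r q)"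
proof -
  have "inj (\<lambda>s. u \<circ> s)"
    using u by (auto intro!: injI simp: fun_eq_iff permutes_inj inj_eq)
  then show ?thesis
    by (simp add: ball_comp_left[OF u] image_Int[OF \<open>inj _\<close>, symmetric]
        card_image[OF inj_on_subset[OF \<open>inj _\<close> subset_UNIV]])
qed

lemma Inter_max_eq_Max_inter_id:
  "Inter_max n d r =
     Max ((\<lambda>p. card (ball n r p \<inter> ball n r id)) ` {p \<in> Sym n. wH n p = d})"
  unfolding Inter_max_def
proof (rule arg_cong[where f = Max], intro set_eqI iffI)
  fix k assume "k \<in> {card (ball n r p \<inter> ball n r q) | p q.
      p \<in> Sym n \<and> q \<in> Sym n \<and> hdist n p q = d}"
  then obtain p q where p: "p permutes {1..n}" and q: "q permutes {1..n}"
    and d: "hdist n p q = d" and k: "k = card (ball n r p \<inter> ball n r q)"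
    unfolding Sym_def by blast
  have "k = card (ball n r (inv p \<circ> p) \<inter> ball n r (inv p \<circ> q))"
    using k card_ball_inter_comp_left[OF permutes_inv[OF p]] by simp
  also have "\<dots> = card (ball n r (inv p \<circ> q) \<inter> ball n r id)"
    by (simp add: permutes_inv_o[OF p] Int_commute)
  finally have "k = card (ball n r (inv p \<circ> q) \<inter> ball n r id)" .
  moreover have "inv p \<circ> q \<in> Sym n"
    unfolding Sym_def using permutes_compose[OF q permutes_inv[OF p]] by simp
  moreover have "wH n (inv p \<circ> q) = d"
    using hdist_comp_left[OF permutes_inj[OF permutes_inv[OF p]], of n p q] d
    by (simp add: wH_def permutes_inv_o[OF p])
  ultimately show "k \<in> (\<lambda>p. card (ball n r p \<inter> ball n r id)) ` {p \<in> Sym n. wH n p = d}"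
    by blast
next
  fix k assume "k \<in> (\<lambda>p. card (ball n r p \<inter> ball n r id)) ` {p \<in> Sym n. wH n p = d}"
  then show "k \<in> {card (ball n r p \<inter> ball n r q) | p q.
      p \<in> Sym n \<and> q \<in> Sym n \<and> hdist n p q = d}"
    using id_in_Sym by (auto simp: wH_def hdist_sym)
qed

lemma hdist_between_agree:
  assumes "hdist n p q = d\<^sub>1 + d\<^sub>2" "hdist n s p \<le> d\<^sub>1" "hdist n s q \<le> d\<^sub>2" "i \<in> {1..n}"
  shows "s i = p i \<or> s i = q i"
proof -
  let ?A = "{i \<in> {1..n}. s i \<noteq> p i}" and ?B = "{i \<in> {1..n}. s i \<noteq> q i}"
  have "{i \<in> {1..n}. p i \<noteq> q i} \<subseteq> ?A \<union> ?B" by auto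
  then have "hdist n p q \<le> card (?A \<union> ?B)"
    unfolding hdist_def by (intro card_mono) auto
  moreover have "card (?A \<union> ?B) + card (?A \<inter> ?B) = card ?A + card ?B"
    by (intro card_Un_Int[symmetric]) auto
  ultimately have "card (?A \<inter> ?B) = 0"
    using assms(1-3) unfolding hdist_def by linarith
  then have "?A \<inter> ?B = {}" by simp
  then show ?thesis using assms(4) by blast
qed

lemma agree_funpow:
  assumes "inj s" "\<And>x. s x = x \<or> s x = g x" "s x = g x"
  shows "s ((g ^^ k) x) = g ((g ^^ k) x)"
proof (induction k)
  case (Suc k)
  let ?y = "(g ^^ k) x"
  have "g ?y = ?y" if "s (g ?y) = g ?y"
    using that Suc.IH injD[OF assms(1), of "g ?y" ?y] by simp
  then show ?case using assms(2)[of "g ?y"] by auto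
qed (simp add: assms(3))

lemma agree_funpow_iff:
  assumes "permutation g" "inj s" "\<And>x. s x = x \<or> s x = g x"
  shows "s ((g ^^ k) x) = g ((g ^^ k) x) \<longleftrightarrow> s x = g x"
proof
  obtain N where N: "g ^^ N = id" "N > 0"
    using permutation_is_nilpotent[OF assms(1)] by blast
  have "N * k - k + k = N * k"
    using N(2) by (cases N) auto
  then have "(g ^^ (N * k - k)) ((g ^^ k) x) = (g ^^ (N * k)) x"
    by (metis funpow_add o_apply)
  also have "\<dots> = x"
    by (simp add: funpow_mult[symmetric] N(1))
  finally show "s x = g x" if "s ((g ^^ k) x) = g ((g ^^ k) x)"
    using agree_funpow[OF assms(2,3) that, of "N * k - k"] by simp
qed (rule agree_funpow[OF assms(2,3)])

lemma cycles_2_3I: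
  assumes "inj p" "\<And>i. p i \<noteq> i \<Longrightarrow> p (p i) = i \<or> p (p (p i)) = i"
  shows "cycles_2_3 p"
  unfolding cycles_2_3_def
proof (intro allI impI)
  fix i assume moved: "p i \<noteq> i"
  show "card (orbit p i) \<in> {2, 3}"
  proof (cases "p (p i) = i")
    case True
    then have "orbit p i = {(p ^^ m) i | m. m < 2}"
      by (intro orbit_altdef_bounded) (simp_all add: numeral_2_eq_2)
    also have "\<dots> = {i, p i}"
      by (auto simp: numeral_2_eq_2 less_Suc_eq intro: exI[of _ 0] exI[of _ 1])
    finally show ?thesis using moved by simp
  next
    case False
    then have "orbit p i = {(p ^^ m) i | m. m < 3}"
      using assms(2)[OF moved] by (intro orbit_altdef_bounded) (simp_all add: numeral_3_eq_3)
    also have "\<dots> = {i, p i, p (p i)}"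
      by (auto simp: numeral_3_eq_3 less_Suc_eq intro: exI[of _ 0] exI[of _ 1] exI[of _ "Suc (Suc 0)"])
    finally have "orbit p i = {i, p i, p (p i)}" .
    moreover have "p (p i) \<noteq> p i"
      using moved injD[OF assms(1)] by blast
    ultimately show ?thesis
      using moved False by simp
  qed
qed

lemma ball_inter_id_follows:
  assumes "wH n p = 2 * r" and "s \<in> ball n r p \<inter> ball n r id"
  shows "s x = x \<or> s x = p x"
proof (cases "x \<in> {1..n}")
  case True
  have "hdist n p id = r + r"
    using assms(1) by (simp add: wH_def hdist_sym)
  then show ?thesis
    using hdist_between_agree[of n p id r r s x] assms(2) True by (auto simp: ball_def)
next
  case False
  then show ?thesis
    using assms(2) permutes_not_in[of s "{1..n}" x] by (simp add: ball_def Sym_def)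
qed

text \<open>Cutting a cycle \<open>(z a b c \<dots>)\<close> of length at least four, with \<open>a = p z\<close>, \<open>b = p a\<close>,
  \<open>c = p b\<close>, into the transposition \<open>(a b)\<close> and the cycle \<open>(z c \<dots>)\<close>.\<close>
definition split_cycle :: "('a \<Rightarrow> 'a) \<Rightarrow> 'a \<Rightarrow> 'a \<Rightarrow> 'a" where
  "split_cycle p z = p \<circ> transpose z (p (p z))"

context
  fixes p :: "nat \<Rightarrow> nat" and n z :: nat
  assumes p: "p permutes {1..n}"
    and long_cycle: "p z \<noteq> z" "p (p z) \<noteq> z" "p (p (p z)) \<noteq> z"
begin

lemma long_cycle_distinct: "p (p z) \<noteq> p z" "p (p (p z)) \<noteq> p z" "p (p (p z)) \<noteq> p (p z)"
  using long_cycle injD[OF permutes_inj[OF p]] by metis+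

lemma long_cycle_in: "z \<in> {1..n}" "p (p z) \<in> {1..n}"
  using long_cycle(1) permutes_in_image[OF p] permutes_not_in[OF p] by blast+

lemma split_cycle_permutes: "split_cycle p z permutes {1..n}"
  unfolding split_cycle_def
  using permutes_compose[OF permutes_swap_id[OF long_cycle_in] p] .

lemma split_cycle_apply:
  "split_cycle p z z = p (p (p z))"
  "split_cycle p z (p (p z)) = p z"
  "x \<noteq> z \<Longrightarrow> x \<noteq> p (p z) \<Longrightarrow> split_cycle p z x = p x"
  by (simp_all add: split_cycle_def)

lemma wH_split_cycle: "wH n (split_cycle p z) = wH n p"
  unfolding wH_def split_cycle_def
  by (rule hdist_cong) (use long_cycle long_cycle_distinct in \<open>auto simp: transpose_def\<close>)

lemma card_non_involutive_split_cycle_less: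
  "card {x \<in> {1..n}. split_cycle p z (split_cycle p z x) \<noteq> x}
     < card {x \<in> {1..n}. p (p x) \<noteq> x}"
proof (rule psubset_card_mono)
  have "split_cycle p z (split_cycle p z x) = x" if "p (p x) = x" for x
  proof -
    have "x \<noteq> z" "x \<noteq> p (p z)" "p x \<noteq> z" "p x \<noteq> p (p z)"
      using that long_cycle injD[OF permutes_inj[OF p]] by metis+
    then show ?thesis using that by (simp add: split_cycle_apply)
  qed
  moreover have "p z \<in> {1..n}"
    using long_cycle_in(1) permutes_in_image[OF p] by blast
  moreover have "split_cycle p z (split_cycle p z (p z)) = p z"
    using long_cycle long_cycle_distinct by (simp add: split_cycle_apply)
  ultimately show "{x \<in> {1..n}. split_cycle p z (split_cycle p z x) \<noteq> x}
      \<subset> {x \<in> {1..n}. p (p x) \<noteq> x}"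
    using long_cycle_distinct(2) by blast
qed simp

context
  fixes r :: nat
  assumes wH_p: "wH n p = 2 * r"
begin

lemma ball_inter_id_cases:
  assumes "s \<in> ball n r p \<inter> ball n r id"
  obtains "s z = p z" "s (p (p z)) = p (p (p z))" | "s z = z" "s (p (p z)) = p (p z)"
proof -
  have follows: "\<And>x. s x = x \<or> s x = p x"
    using ball_inter_id_follows[OF wH_p assms] .
  have "inj s"
    using assms by (auto simp: ball_def Sym_def permutes_inj)
  then have "s ((p ^^ 2) z) = p ((p ^^ 2) z) \<longleftrightarrow> s z = p z"
    by (intro agree_funpow_iff permutes_imp_permutation[OF _ p] follows) simp
  then show ?thesis
    using that follows[of z] follows[of "p (p z)"] by (auto simp: numeral_2_eq_2)
qed

lemma comp_transpose_in_ball_inter_id: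
  assumes s: "s \<in> ball n r p \<inter> ball n r id" and sz: "s z = p z"
  shows "s \<circ> transpose z (p (p z)) \<in> ball n r (split_cycle p z) \<inter> ball n r id"
proof -
  let ?t = "transpose z (p (p z))"
  have t: "?t permutes {1..n}"
    using permutes_swap_id[OF long_cycle_in] .
  have s2: "s (p (p z)) = p (p (p z))"
    using s sz long_cycle(1) by (cases rule: ball_inter_id_cases) auto
  have "hdist n (s \<circ> ?t) (split_cycle p z) = hdist n s p"
    unfolding split_cycle_def by (rule hdist_comp_right[OF t])
  moreover have "hdist n (s \<circ> ?t) id = hdist n s id"
    by (rule hdist_cong) (use sz s2 long_cycle long_cycle_distinct in \<open>auto simp: transpose_def\<close>)
  moreover have "s \<circ> ?t \<in> Sym n"
    using s t by (auto simp: ball_def Sym_def intro: permutes_compose)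
  ultimately show ?thesis
    using s by (simp add: ball_def)
qed

lemma fixing_in_ball_inter_id:
  assumes s: "s \<in> ball n r p \<inter> ball n r id" and sz: "s z = z"
  shows "s \<in> ball n r (split_cycle p z) \<inter> ball n r id"
proof -
  have s2: "s (p (p z)) = p (p z)"
    using s sz long_cycle(1) by (cases rule: ball_inter_id_cases) auto
  have "hdist n s (split_cycle p z) = hdist n s p"
    unfolding split_cycle_def
    by (rule hdist_cong) (use sz s2 long_cycle long_cycle_distinct in \<open>auto simp: transpose_def\<close>)
  then show ?thesis
    using s by (simp add: ball_def)
qed

lemma card_ball_inter_id_split_cycle_ge:
  "card (ball n r p \<inter> ball n r id) \<le> card (ball n r (split_cycle p z) \<inter> ball n r id)"
proof -
  let ?t = "transpose z (p (p z))"
  define f where "f s = (if s z = p z then s \<circ> ?t else s)" for s :: "nat \<Rightarrow> nat"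
  have f_z: "f s z = (if s z = p z then p (p (p z)) else z)" if "s \<in> ball n r p \<inter> ball n r id" for s
    using that long_cycle(1) by (cases rule: ball_inter_id_cases) (auto simp: f_def)
  show ?thesis
  proof (rule card_inj_on_le[of f])
    show "inj_on f (ball n r p \<inter> ball n r id)"
    proof (rule inj_onI)
      fix s s' assume s: "s \<in> ball n r p \<inter> ball n r id" and s': "s' \<in> ball n r p \<inter> ball n r id"
        and eq: "f s = f s'"
      have same_case: "s z = p z \<longleftrightarrow> s' z = p z"
        using f_z[OF s] f_z[OF s'] fun_cong[OF eq, of z] long_cycle(3) by metis
      show "s = s'"
      proof (cases "s z = p z")
        case True
        then have "s \<circ> ?t \<circ> ?t = s' \<circ> ?t \<circ> ?t"
          using eq same_case by (simp add: f_def)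
        then show ?thesis by (simp add: comp_assoc)
      qed (use eq same_case in \<open>simp add: f_def\<close>)
    qed
    show "f ` (ball n r p \<inter> ball n r id) \<subseteq> ball n r (split_cycle p z) \<inter> ball n r id"
    proof
      fix s' assume "s' \<in> f ` (ball n r p \<inter> ball n r id)"
      then obtain s where s: "s \<in> ball n r p \<inter> ball n r id" and s': "s' = f s" by blast
      show "s' \<in> ball n r (split_cycle p z) \<inter> ball n r id"
        using s long_cycle(1) unfolding s' f_def
        by (cases rule: ball_inter_id_cases)
          (use comp_transpose_in_ball_inter_id[OF s] fixing_in_ball_inter_id[OF s] in auto)
    qed
    show "finite (ball n r (split_cycle p z) \<inter> ball n r id)"
      using finite_Sym by (simp add: ball_def)
  qed
qed

end

end

lemma exists_cycles_2_3_ball_inter_id_ge: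
  assumes "p \<in> Sym n" "wH n p = 2 * r"
  shows "\<exists>q \<in> Sym n. wH n q = 2 * r \<and> cycles_2_3 q \<and>
           card (ball n r p \<inter> ball n r id) \<le> card (ball n r q \<inter> ball n r id)"
  using assms
proof (induction "card {x \<in> {1..n}. p (p x) \<noteq> x}" arbitrary: p rule: less_induct)
  case less
  have p: "p permutes {1..n}"
    using less.prems(1) by (simp add: Sym_def)
  show ?case
  proof (cases "\<exists>z. p z \<noteq> z \<and> p (p z) \<noteq> z \<and> p (p (p z)) \<noteq> z")
    case True
    then obtain z where z: "p z \<noteq> z" "p (p z) \<noteq> z" "p (p (p z)) \<noteq> z" by blast
    let ?q = "split_cycle p z"
    have "?q \<in> Sym n" "wH n ?q = 2 * r"
      using split_cycle_permutes[OF p z] wH_split_cycle[OF p z] less.prems(2)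
      by (simp_all add: Sym_def)
    then obtain q where "q \<in> Sym n" "wH n q = 2 * r" "cycles_2_3 q"
        "card (ball n r ?q \<inter> ball n r id) \<le> card (ball n r q \<inter> ball n r id)"
      using less.hyps[OF card_non_involutive_split_cycle_less[OF p z]] by blast
    then show ?thesis
      using card_ball_inter_id_split_cycle_ge[OF p z less.prems(2)] le_trans by blast
  next
    case False
    then have "cycles_2_3 p"
      by (intro cycles_2_3I permutes_inj[OF p]) blast
    then show ?thesis
      using less.prems by blast
  qed
qed

definition swap_pairs :: "nat \<Rightarrow> nat \<Rightarrow> nat" where
  "swap_pairs r x = (if 1 \<le> x \<and> x \<le> 2 * r then if odd x then x + 1 else x - 1 else x)"

lemma swap_pairs_in_Sym:
  assumes "2 * r \<le> n"
  shows "swap_pairs r \<in> Sym n"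
proof -
  have involutive: "swap_pairs r (swap_pairs r x) = x" for x
    unfolding swap_pairs_def by (auto; presburger)
  show ?thesis
    unfolding Sym_def permutes_def
  proof (intro CollectI conjI allI impI)
    show "swap_pairs r x = x" if "x \<notin> {1..n}" for x
      using that assms by (auto simp: swap_pairs_def)
    show "\<exists>!x. swap_pairs r x = y" for y
      using involutive by metis
  qed
qed

lemma wH_swap_pairs:
  assumes "2 * r \<le> n"
  shows "wH n (swap_pairs r) = 2 * r"
proof -
  have "{i \<in> {1..n}. id i \<noteq> swap_pairs r i} = {1..2 * r}"
    using assms unfolding swap_pairs_def by (auto; presburger)
  then show ?thesis
    by (simp add: wH_def hdist_def)
qed

theorem lemma9:
  fixes n r :: nat
  assumes "r \<ge> 1" and "n \<ge> 2 * r"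
  shows "\<exists>p \<in> Sym n. wH n p = 2 * r \<and> cycles_2_3 p \<and>
           Inter_max n (2 * r) r = card (ball n r p \<inter> ball n r id)"
proof -
  let ?W = "{p \<in> Sym n. wH n p = 2 * r}"
  let ?g = "\<lambda>p. card (ball n r p \<inter> ball n r id)"
  have fin: "finite (?g ` ?W)"
    using finite_Sym by (intro finite_imageI) simp
  moreover have "?g ` ?W \<noteq> {}"
    using swap_pairs_in_Sym[OF assms(2)] wH_swap_pairs[OF assms(2)] by auto
  ultimately have "Max (?g ` ?W) \<in> ?g ` ?W"
    by (rule Max_in)
  then obtain p where p: "p \<in> Sym n" "wH n p = 2 * r" "?g p = Max (?g ` ?W)"
    by auto
  obtain q where q: "q \<in> Sym n" "wH n q = 2 * r" "cycles_2_3 q" "?g p \<le> ?g q"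
    using exists_cycles_2_3_ball_inter_id_ge[OF p(1,2)] by blast
  have "?g q \<le> Max (?g ` ?W)"
    using fin q(1,2) by (intro Max_ge) auto
  then have "Inter_max n (2 * r) r = ?g q"
    unfolding Inter_max_eq_Max_inter_id using p(3) q(4) by linarith
  then show ?thesis
    using q(1-3) by blast
qed



end
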